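(* Consider the following transition system (an abstract model of a counting network with one balancer and two counters). A state consists of a bit $b \in \{0,1\}$, natural numbers $n_0, n_1$, finite sets $\tau^0, \tau^1$ of tokens (natural numbers), and two finite maps ("histories") $H^0, H^1$ from natural numbers to pairs $(\hat\iota, z)$ where $\hat\iota$ is a finite set of tokens and $z$ is a token. Write $\mathsf{spent}(H)$ for the set of second components $z$ of entries of $H$, and $\tau = \tau^0 \cup \tau^1$. The initial state is $b = 0$, $n_0 = 0$, $n_1 = 1$, $\tau^0 = \tau^1 = \emptyset$, $H^0 = \{0 \mapsto (\{0\}, 0)\}$, $H^1 = \{1 \mapsto (\{1\}, 1)\}$. The transitions are: (Flip) choose a token $z \notin \tau^0 \cup \tau^1 \cup \mathsf{spent}(H^0) \cup \mathsf{spent}(H^1)$, add $z$ to $\tau^{b}$, and set $b := 1 - b$; (Increment) for $i \in \{0,1\}$ and a token $z \in \tau^i$: add the entry $(n_i + 2) \mapsto (\tau^0 \cup \tau^1, z)$ to $H^i$ (the set $\tau^0 \cup \tau^1$ taken before removing $z$), remove $z$ from $\tau^i$, and set $n_i := n_i + 2$. Then every state reachable from the initial state by finitely many transitions satisfies: (1) $|H^0| + |\tau^0| = |H^1| + |\tau^1| + b$; (2) $\mathrm{dom}\,H^0 = \{0, 2, 4, \dots, n_0\}$ and $\mathrm{dom}\,H^1 = \{1, 3, 5, \dots, n_1\}$; (3) the sets $\tau^0$, $\tau^1$, $\mathsf{spent}(H^0) \cup \mathsf{spent}(H^1)$ are pairwise disjoint; (4) for every entry $t \mapsto (\hat\iota,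 z)$ of $H^0$ or $H^1$, $z \in \hat\iota$; (5) for every entry $t \mapsto (\hat\iota, z)$ of $H^0$: $t + 2|\hat\iota \cap \tau^0| < n_1 + 2|\hat\iota \cap \tau^1| + 2$; and for every entry $t \mapsto (\hat\iota, z)$ of $H^1$: $t + 2|\hat\iota \cap \tau^1| < n_0 + 2|\hat\iota \cap \tau^0| + 2$.
   Context: $|S|$ denotes the cardinality of a finite set or the number of entries of a finite map $S$. Tokens are natural numbers. The model corresponds to a counter implementation in which a balancer bit $b$ directs each incrementing thread to counter $c_0$ (holding even values $n_0$) or $c_1$ (holding odd values $n_1$); a "flip" issues a token for the counter indicated by the old value of $b$, and an "increment" spends such a token to add 2 to that counter, recording the new value together with a snapshot of the currently outstanding tokens. *)

theory Defs
  imports Main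
begin

text \<open>Histories: finite maps from natural numbers to pairs (iota-hat, z).
  The cardinality of a history H is the number of its entries, card (dom H).\<close>
type_synonym history = "nat \<rightharpoonup> (nat set \<times> nat)"

record cstate =
  bit :: nat
  n0 :: nat
  n1 :: nat
  tok0 :: "nat set"
  tok1 :: "nat set"
  H0 :: history
  H1 :: history

definition spent :: "history \<Rightarrow> nat set" where
  "spent H = snd ` ran H"

definition init_state :: cstate where
  "init_state = \<lparr> bit = 0, n0 = 0, n1 = 1, tok0 = {}, tok1 = {},
     H0 = [0 \<mapsto> ({0}, 0)], H1 = [1 \<mapsto> ({1}, 1)] \<rparr>"

inductive reachable :: "cstate \<Rightarrow> bool" where
  init: "reachable init_state"
| flip: "reachable s \<Longrightarrow>
     z \<notin> tok0 s \<union> tok1 s \<union> spent (H0 s) \<union> spent (H1 s) \<Longrightarrow>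
     reachable (if bit s = 0
                then s\<lparr> tok0 := insert z (tok0 s), bit := 1 - bit s \<rparr>
                else s\<lparr> tok1 := insert z (tok1 s), bit := 1 - bit s \<rparr>)"
| inc0: "reachable s \<Longrightarrow> z \<in> tok0 s \<Longrightarrow>
     reachable (s\<lparr> H0 := (H0 s)(n0 s + 2 \<mapsto> (tok0 s \<union> tok1 s, z)),
                  tok0 := tok0 s - {z}, n0 := n0 s + 2 \<rparr>)"
| inc1: "reachable s \<Longrightarrow> z \<in> tok1 s \<Longrightarrow>
     reachable (s\<lparr> H1 := (H1 s)(n1 s + 2 \<mapsto> (tok0 s \<union> tok1 s, z)),
                  tok1 := tok1 s - {z}, n1 := n1 s + 2 \<rparr>)"

end

(* Every increment adds one key of the right parity to
   its history, so 2|H0| = n0 + 2 and 2|H1| = n1 + 1, and clause (1) becomes the balance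
   n0 + 2|tau0| + 1 = n1 + 2|tau1| + 2b, which every transition visibly preserves.
   For clause (5): an increment of counter i records iota = tau, and the bound for that new
   entry is exactly the balance together with b <= 1; older entries only get better, since
   n_i grows by 2 while removing one token from tau_i changes a card by at most 1; and the
   token added by a flip is fresh, hence outside every recorded iota, because recorded sets
   only ever contain outstanding or spent tokens. *)

theory Submission
  imports Defs
begin

lemma insert_even_atMost:
  "even (n :: nat) \<Longrightarrow> insert (n + 2) {k. even k \<and> k \<le> n} = {k. even k \<and> k \<le> n + 2}"
  by (auto simp: le_Suc_eq)

lemma insert_odd_atMost:
  "odd (n :: nat) \<Longrightarrow> insert (n + 2) {k. odd k \<and> k \<le> n} = {k. odd k \<and> k \<le> n + 2}"
  by (auto simp: le_Suc_eq)

lemma card_even_atMost: "card {k. even k \<and> k \<le> 2 * m} = m + 1"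
proof (induction m)
  case 0
  have "{k. even k \<and> k \<le> 2 * 0} = {0 :: nat}" by auto
  then show ?case by simp
next
  case (Suc m)
  have "{k. even k \<and> k \<le> 2 * Suc m} = insert (2 * m + 2) {k. even k \<and> k \<le> 2 * m}"
    using insert_even_atMost[of "2 * m"] by simp
  with Suc.IH show ?case by simp
qed

lemma card_odd_atMost: "card {k. odd k \<and> k \<le> 2 * m + 1} = m + 1"
proof (induction m)
  case 0
  have "{k. odd k \<and> k \<le> 2 * 0 + 1} = {1 :: nat}" by (auto simp: le_Suc_eq)
  then show ?case by simp
next
  case (Suc m)
  have "{k. odd k \<and> k \<le> 2 * Suc m + 1} = insert (2 * m + 1 + 2) {k. odd k \<and> k \<le> 2 * m + 1}"
    using insert_odd_atMost[of "2 * m + 1"] by simp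
  with Suc.IH show ?case by simp
qed

lemma card_le_Suc_card_Diff1: "card A \<le> Suc (card (A - {x}))"
  by (cases "finite A \<and> x \<in> A") (auto simp: card_Suc_Diff1)

lemma card_Int_Diff1_bounds:
  "card (I \<inter> (A - {x})) \<le> card (I \<inter> A)" "card (I \<inter> A) \<le> Suc (card (I \<inter> (A - {x})))"
  using card_Diff1_le[of "I \<inter> A" x] card_le_Suc_card_Diff1[of "I \<inter> A" x]
  by (simp_all add: Int_Diff)

lemma spent_fun_upd_fresh: "H k = None \<Longrightarrow> spent (H(k \<mapsto> (I, z))) = insert z (spent H)"
  unfolding spent_def by simp

lemma reachable_bit_le_1: "reachable s \<Longrightarrow> bit s \<le> 1"
  by (induction rule: reachable.induct) (auto simp: init_state_def)

lemma reachable_finite_tokens: "reachable s \<Longrightarrow> finite (tok0 s) \<and> finite (tok1 s)"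
  by (induction rule: reachable.induct) (auto simp: init_state_def)

lemma reachable_dom_histories:
  "reachable s \<Longrightarrow> even (n0 s) \<and> odd (n1 s)
     \<and> dom (H0 s) = {k. even k \<and> k \<le> n0 s} \<and> dom (H1 s) = {k. odd k \<and> k \<le> n1 s}"
proof (induction rule: reachable.induct)
  case init
  have "{k. even k \<and> k \<le> 0} = {0 :: nat}" "{k. odd k \<and> k \<le> 1} = {1 :: nat}"
    by (auto elim: oddE)
  then show ?case by (auto simp: init_state_def dom_def)
next
  case (flip s z)
  then show ?case by simp
next
  case (inc0 s z)
  then show ?case using insert_even_atMost[of "n0 s"] by (simp del: fun_upd_apply)
next
  case (inc1 s z)
  then show ?case using insert_odd_atMost[of "n1 s"] by (simp del: fun_upd_apply)
qed

lemma reachable_fresh_keys: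
  assumes "reachable s"
  shows "H0 s (n0 s + 2) = None \<and> H1 s (n1 s + 2) = None"
proof -
  have "n0 s + 2 \<notin> dom (H0 s)" "n1 s + 2 \<notin> dom (H1 s)"
    using reachable_dom_histories[OF assms] by simp_all
  then show ?thesis by (metis domIff)
qed

lemma reachable_card_histories:
  assumes "reachable s"
  shows "2 * card (dom (H0 s)) = n0 s + 2 \<and> 2 * card (dom (H1 s)) = n1 s + 1"
proof -
  have dom: "even (n0 s)" "odd (n1 s)"
    "dom (H0 s) = {k. even k \<and> k \<le> n0 s}" "dom (H1 s) = {k. odd k \<and> k \<le> n1 s}"
    using reachable_dom_histories[OF assms] by simp_all
  obtain a b where "n0 s = 2 * a" "n1 s = 2 * b + 1"
    using dom(1,2) by (auto elim!: evenE oddE)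
  with dom(3,4) show ?thesis using card_even_atMost[of a] card_odd_atMost[of b] by simp
qed

lemma reachable_balance:
  "reachable s \<Longrightarrow> n0 s + 2 * card (tok0 s) + 1 = n1 s + 2 * card (tok1 s) + 2 * bit s"
proof (induction rule: reachable.induct)
  case init
  show ?case by (simp add: init_state_def)
next
  case (flip s z)
  then show ?case
    using reachable_finite_tokens[OF flip.hyps(1)] reachable_bit_le_1[OF flip.hyps(1)] by auto
next
  case (inc0 s z)
  have "card (tok0 s) > 0"
    using inc0 reachable_finite_tokens[OF inc0.hyps(1)] by (auto simp: card_gt_0_iff)
  with inc0 show ?case by simp
next
  case (inc1 s z)
  have "card (tok1 s) > 0"
    using inc1 reachable_finite_tokens[OF inc1.hyps(1)] by (auto simp: card_gt_0_iff)
  with inc1 show ?case by simp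
qed

lemma reachable_tokens_disjoint:
  "reachable s \<Longrightarrow> tok0 s \<inter> tok1 s = {}
     \<and> tok0 s \<inter> (spent (H0 s) \<union> spent (H1 s)) = {}
     \<and> tok1 s \<inter> (spent (H0 s) \<union> spent (H1 s)) = {}"
proof (induction rule: reachable.induct)
  case init
  show ?case by (simp add: init_state_def)
next
  case (flip s z)
  show ?case
  proof (cases "bit s = 0")
    case True
    with flip show ?thesis by (simp; blast)
  next
    case False
    \<comment> \<open>passed explicitly: simp would weaken the premise to \<open>0 < bit s\<close> and leave the \<open>if\<close>\<close>
    with flip show ?thesis by (simp add: False; blast)
  qed
next
  case (inc0 s z)
  have "spent ((H0 s)(n0 s + 2 \<mapsto> (tok0 s \<union> tok1 s, z))) = insert z (spent (H0 s))"
    using reachable_fresh_keys[OF inc0.hyps(1)] by (intro spent_fun_upd_fresh) simp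
  \<comment> \<open>without deleting \<open>fun_upd_apply\<close>, simp eta-expands the update and the fact above no longer applies\<close>
  with inc0 show ?case by (simp del: fun_upd_apply; blast)
next
  case (inc1 s z)
  have "spent ((H1 s)(n1 s + 2 \<mapsto> (tok0 s \<union> tok1 s, z))) = insert z (spent (H1 s))"
    using reachable_fresh_keys[OF inc1.hyps(1)] by (intro spent_fun_upd_fresh) simp
  with inc1 show ?case by (simp del: fun_upd_apply; blast)
qed

lemma reachable_history_entries:
  "reachable s \<Longrightarrow> H0 s t = Some (I, y) \<or> H1 s t = Some (I, y) \<Longrightarrow>
     y \<in> I \<and> I \<subseteq> tok0 s \<union> tok1 s \<union> spent (H0 s) \<union> spent (H1 s)"
proof (induction arbitrary: t I y rule: reachable.induct)
  case init
  then have "I = {y}" "y \<in> {0, 1}" by (auto simp: init_state_def split: if_splits)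
  moreover have "spent (H0 init_state) = {0}" "spent (H1 init_state) = {1}"
    by (simp_all add: init_state_def spent_def)
  ultimately show ?case by auto
next
  case (flip s z)
  have "H0 s t = Some (I, y) \<or> H1 s t = Some (I, y)"
    using flip.prems by (simp split: if_split_asm)
  then have "y \<in> I \<and> I \<subseteq> tok0 s \<union> tok1 s \<union> spent (H0 s) \<union> spent (H1 s)"
    by (rule flip.IH)
  then show ?case by (simp; blast)
next
  case (inc0 s z)
  have "spent ((H0 s)(n0 s + 2 \<mapsto> (tok0 s \<union> tok1 s, z))) = insert z (spent (H0 s))"
    using reachable_fresh_keys[OF inc0.hyps(1)] by (intro spent_fun_upd_fresh) simp
  moreover from inc0.prems have "t = n0 s + 2 \<and> I = tok0 s \<union> tok1 s \<and> y = z
      \<or> H0 s t = Some (I, y) \<or> H1 s t = Some (I, y)"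
    by (auto split: if_splits)
  then have "y \<in> I \<and> I \<subseteq> tok0 s \<union> tok1 s \<union> spent (H0 s) \<union> spent (H1 s)"
    using inc0.IH[of t I y] inc0.hyps(2) by blast
  ultimately show ?case by (simp del: fun_upd_apply) blast
next
  case (inc1 s z)
  have "spent ((H1 s)(n1 s + 2 \<mapsto> (tok0 s \<union> tok1 s, z))) = insert z (spent (H1 s))"
    using reachable_fresh_keys[OF inc1.hyps(1)] by (intro spent_fun_upd_fresh) simp
  moreover from inc1.prems have "t = n1 s + 2 \<and> I = tok0 s \<union> tok1 s \<and> y = z
      \<or> H0 s t = Some (I, y) \<or> H1 s t = Some (I, y)"
    by (auto split: if_splits)
  then have "y \<in> I \<and> I \<subseteq> tok0 s \<union> tok1 s \<union> spent (H0 s) \<union> spent (H1 s)"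
    using inc1.IH[of t I y] inc1.hyps(2) by blast
  ultimately show ?case by (simp del: fun_upd_apply) blast
qed

lemma reachable_history_bounds:
  "reachable s \<Longrightarrow>
     (H0 s t = Some (I, y) \<longrightarrow> t + 2 * card (I \<inter> tok0 s) < n1 s + 2 * card (I \<inter> tok1 s) + 2)
   \<and> (H1 s t = Some (I, y) \<longrightarrow> t + 2 * card (I \<inter> tok1 s) < n0 s + 2 * card (I \<inter> tok0 s) + 2)"
proof (induction arbitrary: t I y rule: reachable.induct)
  case init
  show ?case by (simp add: init_state_def)
next
  case (flip s z)
  have "I \<inter> insert z T = I \<inter> T" if "H0 s t = Some (I, y) \<or> H1 s t = Some (I, y)" for T
    using reachable_history_entries[OF flip.hyps(1) that] flip.hyps(2) by blast
  with flip.IH[of t I y] show ?case by simp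
next
  case (inc0 s z)
  have "finite (tok0 s)"
    using reachable_finite_tokens[OF inc0.hyps(1)] by blast
  from card_Suc_Diff1[OF this inc0.hyps(2)]
  have new_entry: "n0 s + 2 + 2 * card (tok0 s - {z}) < n1 s + 2 * card (tok1 s) + 2"
    using reachable_balance[OF inc0.hyps(1)] reachable_bit_le_1[OF inc0.hyps(1)] by linarith
  have old_same: "t + 2 * card (I \<inter> (tok0 s - {z})) < n1 s + 2 * card (I \<inter> tok1 s) + 2"
    if "H0 s t = Some (I, y)"
    using inc0.IH[of t I y] that card_Int_Diff1_bounds(1)[of I "tok0 s" z] by simp
  have old_other: "t + 2 * card (I \<inter> tok1 s) < n0 s + 2 + 2 * card (I \<inter> (tok0 s - {z})) + 2"
    if "H1 s t = Some (I, y)"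
    using inc0.IH[of t I y] that card_Int_Diff1_bounds(2)[of I "tok0 s" z] by simp
  show ?case
  proof (cases "t = n0 s + 2")
    case True
    show ?thesis (is "(?new \<longrightarrow> ?new_bound) \<and> (?old \<longrightarrow> ?old_bound)")
    proof (intro conjI impI)
      assume ?new
      with True have "I = tok0 s \<union> tok1 s" "y = z" by simp_all
      moreover have "(tok0 s \<union> tok1 s) \<inter> (tok0 s - {z}) = tok0 s - {z}"
        "(tok0 s \<union> tok1 s) \<inter> tok1 s = tok1 s" by auto
      ultimately show ?new_bound using True new_entry by simp
    next
      assume ?old
      then show ?old_bound using old_other by simp
    qed
  next
    case False
    with old_same old_other show ?thesis by simp
  qed
next
  case (inc1 s z)
  have "finite (tok1 s)"
    using reachable_finite_tokens[OF inc1.hyps(1)] by blast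
  from card_Suc_Diff1[OF this inc1.hyps(2)]
  have new_entry: "n1 s + 2 + 2 * card (tok1 s - {z}) < n0 s + 2 * card (tok0 s) + 2"
    using reachable_balance[OF inc1.hyps(1)] reachable_bit_le_1[OF inc1.hyps(1)] by linarith
  have old_same: "t + 2 * card (I \<inter> (tok1 s - {z})) < n0 s + 2 * card (I \<inter> tok0 s) + 2"
    if "H1 s t = Some (I, y)"
    using inc1.IH[of t I y] that card_Int_Diff1_bounds(1)[of I "tok1 s" z] by simp
  have old_other: "t + 2 * card (I \<inter> tok0 s) < n1 s + 2 + 2 * card (I \<inter> (tok1 s - {z})) + 2"
    if "H0 s t = Some (I, y)"
    using inc1.IH[of t I y] that card_Int_Diff1_bounds(2)[of I "tok1 s" z] by simp
  show ?case
  proof (cases "t = n1 s + 2")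
    case True
    show ?thesis (is "(?old \<longrightarrow> ?old_bound) \<and> (?new \<longrightarrow> ?new_bound)")
    proof (intro conjI impI)
      assume ?old
      then show ?old_bound using old_other by simp
    next
      assume ?new
      with True have "I = tok0 s \<union> tok1 s" "y = z" by simp_all
      moreover have "(tok0 s \<union> tok1 s) \<inter> (tok1 s - {z}) = tok1 s - {z}"
        "(tok0 s \<union> tok1 s) \<inter> tok0 s = tok0 s" by auto
      ultimately show ?new_bound using True new_entry by simp
    qed
  next
    case False
    with old_same old_other show ?thesis by simp
  qed
qed

theorem mainTheorem4:
  assumes "reachable s"
  shows "card (dom (H0 s)) + card (tok0 s) = card (dom (H1 s)) + card (tok1 s) + bit s
    \<and> dom (H0 s) = {k. even k \<and> k \<le> n0 s}
    \<and> dom (H1 s) = {k. odd k \<and> k \<le> n1 s}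
    \<and> tok0 s \<inter> tok1 s = {}
    \<and> tok0 s \<inter> (spent (H0 s) \<union> spent (H1 s)) = {}
    \<and> tok1 s \<inter> (spent (H0 s) \<union> spent (H1 s)) = {}
    \<and> (\<forall>t I z. (H0 s t = Some (I, z) \<or> H1 s t = Some (I, z)) \<longrightarrow> z \<in> I)
    \<and> (\<forall>t I z. H0 s t = Some (I, z) \<longrightarrow>
          t + 2 * card (I \<inter> tok0 s) < n1 s + 2 * card (I \<inter> tok1 s) + 2)
    \<and> (\<forall>t I z. H1 s t = Some (I, z) \<longrightarrow>
          t + 2 * card (I \<inter> tok1 s) < n0 s + 2 * card (I \<inter> tok0 s) + 2)"
proof -
  have "card (dom (H0 s)) + card (tok0 s) = card (dom (H1 s)) + card (tok1 s) + bit s"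
    using reachable_card_histories[OF assms] reachable_balance[OF assms] by linarith
  moreover have "\<forall>t I z. (H0 s t = Some (I, z) \<or> H1 s t = Some (I, z)) \<longrightarrow> z \<in> I"
    using reachable_history_entries[OF assms] by blast
  moreover have
    "\<forall>t I z. H0 s t = Some (I, z) \<longrightarrow>
       t + 2 * card (I \<inter> tok0 s) < n1 s + 2 * card (I \<inter> tok1 s) + 2"
    "\<forall>t I z. H1 s t = Some (I, z) \<longrightarrow>
       t + 2 * card (I \<inter> tok1 s) < n0 s + 2 * card (I \<inter> tok0 s) + 2"
    using reachable_history_bounds[OF assms] by blast+
  ultimately show ?thesis
    using reachable_dom_histories[OF assms] reachable_tokens_disjoint[OF assms]
    by (elim conjE) (intro conjI; assumption)
qed

end
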